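(* In the bilateral multitask setting with action space $\mathbb R_+^d$, suppose the principal's utility $u$ is concave and homogeneous of degree $k_u\in(0,1)$ and the agent's cost $c$ is convex and homogeneous of degree $k_c>1$, and that the maximizers defining $V^*_{\mathsf{FB}}$ and $V^*_{\mathsf{LIN}}$ exist, are interior, and $V^*_{\mathsf{FB}}>0$. Then $$\frac{V^*_{\mathsf{LIN}}}{V^*_{\mathsf{FB}}}=k_c^{-k_u/(k_c-k_u)}.$$
   Context: Bilateral multitask setting: the agent chooses $a\in\mathbb R_+^d$ at cost $c(a)$, the principal has gross benefit $u(a)$, signals have $\mathbb E[x\mid a]=a$, and a linear contract $\phi\in\mathbb R_+^d$ pays $\langle\phi,x\rangle$ and induces the agent's best response $a(\phi)\in\arg\max_a\{\langle\phi,a\rangle-c(a)\}$. Define $V^*_{\mathsf{LIN}}=\max_\phi\{u(a(\phi))-\langle\phi,a(\phi)\rangle\}$ and the first-best value $V^*_{\mathsf{FB}}=\max_a\{u(a)-c(a)\}$. A function $g$ is homogeneous of degree $k$ if $g(\lambda a)=\lambda^kg(a)$ for all $\lambda>0$. *)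

theory Defs
  imports "HOL-Analysis.Analysis"
begin

definition orthant :: "(real ^ 'd) set" where
  "orthant = {a. \<forall>i. 0 \<le> a $ i}"

definition orthant_interior :: "(real ^ 'd) set" where
  "orthant_interior = {a. \<forall>i. 0 < a $ i}"

definition homogeneous_on_orthant :: "real \<Rightarrow> (real ^ 'd \<Rightarrow> real) \<Rightarrow> bool" where
  "homogeneous_on_orthant k g \<longleftrightarrow>
     (\<forall>t>0. \<forall>a\<in>orthant. g (t *\<^sub>R a) = t powr k * g a)"

definition best_response :: "(real ^ 'd \<Rightarrow> real) \<Rightarrow> real ^ 'd \<Rightarrow> real ^ 'd \<Rightarrow> bool" where
  "best_response c \<phi> a \<longleftrightarrow> a \<in> orthant \<and>
     (\<forall>b\<in>orthant. \<phi> \<bullet> b - c b \<le> \<phi> \<bullet> a - c a)"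

end

theory Submission
  imports Defs
begin

(* By Euler's relation for the cost, an agent best-responding with a to a linear contract phi
   is paid <phi, a> = kc c(a), so the principal earns u(a) - kc c(a). Writing a = s b with
   s = kc powr (-1/(kc - ku)), homogeneity turns this into s^ku (u(b) - c(b)) <= s^ku V_FB.
   Conversely, a non-vertical hyperplane separating the epigraph of c from the hypograph of u,
   shifted to touch it at aFB, gives a common subgradient of c and supergradient of u at aFB.
   It is nonnegative because u >= 0, so it is a linear contract implementing aFB; scaling it by
   s^(kc-1) implements s aFB and earns exactly s^ku V_FB. *)

lemma convex_strict_hypograph:
  assumes "concave_on S g"
  shows "convex {(x, y). x \<in> S \<and> y < g x}"
  unfolding convex_def
proof clarsimp
  fix x1 y1 x2 y2 and u v :: real
  assume x: "x1 \<in> S" "x2 \<in> S" and y: "y1 < g x1" "y2 < g x2"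
    and uv: "0 \<le> u" "0 \<le> v" "u + v = 1"
  have "u * y1 + v * y2 < u * g x1 + v * g x2"
    using y uv by (smt (verit) mult_left_mono mult_strict_left_mono)
  also have "\<dots> \<le> g (u *\<^sub>R x1 + v *\<^sub>R x2)"
    using assms x uv by (simp add: concave_on_iff)
  finally show "u *\<^sub>R x1 + v *\<^sub>R x2 \<in> S \<and> u * y1 + v * y2 < g (u *\<^sub>R x1 + v *\<^sub>R x2)"
    using assms x uv by (simp add: concave_on_iff convex_def)
qed

lemma inner_constant_near_interior_point_imp_zero:
  fixes \<psi> :: "'a::real_inner"
  assumes "x0 \<in> interior K" and const: "\<forall>x\<in>K. \<psi> \<bullet> x = \<psi> \<bullet> x0"
  shows "\<psi> = 0"
proof (rule ccontr)
  assume "\<psi> \<noteq> 0"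
  obtain e where e: "e > 0" "cball x0 e \<subseteq> K"
    using assms(1) mem_interior_cball by blast
  define x where "x = x0 + (e / norm \<psi>) *\<^sub>R \<psi>"
  have "x \<in> K" using e \<open>\<psi> \<noteq> 0\<close> by (auto simp: x_def dist_norm)
  moreover have "\<psi> \<bullet> x = \<psi> \<bullet> x0 + e * norm \<psi>"
    using \<open>\<psi> \<noteq> 0\<close>
    by (simp add: x_def inner_add_right power2_norm_eq_inner[symmetric] power2_eq_square)
  ultimately show False using const e \<open>\<psi> \<noteq> 0\<close> by simp
qed

lemma separating_nonvertical_hyperplane:
  fixes f g :: "'a::euclidean_space \<Rightarrow> real"
  assumes f: "convex_on K f" and g: "concave_on K g" and int: "interior K \<noteq> {}"
    and le: "\<forall>x\<in>K. g x \<le> f x"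
  obtains \<psi> \<mu> \<beta> where "\<mu> < 0"
    and "\<And>x y. x \<in> K \<Longrightarrow> f x \<le> y \<Longrightarrow> \<psi> \<bullet> x + \<mu> * y \<le> \<beta>"
    and "\<And>x y. x \<in> K \<Longrightarrow> y < g x \<Longrightarrow> \<beta> \<le> \<psi> \<bullet> x + \<mu> * y"
proof -
  obtain x0 where x0: "x0 \<in> interior K" using int by blast
  then have x0K: "x0 \<in> K" using interior_subset by blast
  define T where "T = {(x, y). x \<in> K \<and> y < g x}"
  have "convex T"
    unfolding T_def using g by (rule convex_strict_hypograph)
  moreover have "epigraph K f \<inter> T = {}"
    using le by (force simp: epigraph_def T_def)
  moreover have "(x0, f x0) \<in> epigraph K f" "(x0, g x0 - 1) \<in> T"
    using x0K by (simp_all add: mem_epigraph T_def)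
  ultimately obtain w \<beta> where "w \<noteq> 0"
    and sep_epigraph: "\<forall>p\<in>epigraph K f. w \<bullet> p \<le> \<beta>" and sep_T: "\<forall>p\<in>T. \<beta> \<le> w \<bullet> p"
    using separating_hyperplane_sets[OF convex_epigraphI[OF f]] by blast
  obtain \<psi> \<mu> where w: "w = (\<psi>, \<mu>)" by (cases w)
  have below: "\<psi> \<bullet> x + \<mu> * y \<le> \<beta>" if "x \<in> K" "f x \<le> y" for x y
    using bspec[OF sep_epigraph, of "(x, y)"] that w by (simp add: mem_epigraph)
  have above: "\<beta> \<le> \<psi> \<bullet> x + \<mu> * y" if "x \<in> K" "y < g x" for x y
    using bspec[OF sep_T, of "(x, y)"] that w by (simp add: T_def)
  have "\<mu> * (f x0 - g x0 + 2) \<le> 0"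
    using below[OF x0K, of "f x0 + 1"] above[OF x0K, of "g x0 - 1"] by (simp add: algebra_simps)
  moreover have "0 < f x0 - g x0 + 2" using le x0K by force
  ultimately have "\<mu> \<le> 0" by (simp add: mult_le_0_iff)
  moreover have "\<mu> \<noteq> 0"
  proof
    \<comment> \<open>a vertical hyperplane would make \<open>\<psi>\<close> constant on \<open>K\<close>, impossible around the interior point \<open>x0\<close>\<close>
    assume "\<mu> = 0"
    have "\<psi> \<bullet> x = \<beta>" if "x \<in> K" for x
      using below[OF that order_refl] above[OF that, of "g x - 1"] \<open>\<mu> = 0\<close> by simp
    then have "\<psi> = 0"
      using inner_constant_near_interior_point_imp_zero[OF x0, of \<psi>] x0K by simp
    with \<open>\<mu> = 0\<close> \<open>w \<noteq> 0\<close> w show False by (simp add: zero_prod_def)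
  qed
  ultimately have "\<mu> < 0" by simp
  then show ?thesis using below above by (rule that)
qed

lemma concave_convex_sandwich:
  fixes f g :: "'a::euclidean_space \<Rightarrow> real"
  assumes f: "convex_on K f" and g: "concave_on K g" and int: "interior K \<noteq> {}"
    and le: "\<forall>x\<in>K. g x \<le> f x"
  shows "\<exists>\<phi> b. \<forall>x\<in>K. g x \<le> \<phi> \<bullet> x + b \<and> \<phi> \<bullet> x + b \<le> f x"
proof -
  obtain \<psi> \<mu> \<beta> where \<mu>: "\<mu> < 0"
    and below: "\<And>x. x \<in> K \<Longrightarrow> \<psi> \<bullet> x + \<mu> * f x \<le> \<beta>"
    and above: "\<And>x y. x \<in> K \<Longrightarrow> y < g x \<Longrightarrow> \<beta> \<le> \<psi> \<bullet> x + \<mu> * y"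
    using separating_nonvertical_hyperplane[OF f g int le] by (metis order_refl)
  have above_g: "\<beta> \<le> \<psi> \<bullet> x + \<mu> * g x" if x: "x \<in> K" for x
  proof (rule field_le_epsilon)
    fix e :: real assume "0 < e"
    then have "\<beta> \<le> \<psi> \<bullet> x + \<mu> * (g x + e / \<mu>)"
      using above[OF x, of "g x + e / \<mu>"] \<mu> by (simp add: divide_pos_neg)
    then show "\<beta> \<le> \<psi> \<bullet> x + \<mu> * g x + e"
      using \<mu> by (simp add: algebra_simps)
  qed
  have "g x \<le> (- (1 / \<mu>) *\<^sub>R \<psi>) \<bullet> x + \<beta> / \<mu> \<and> (- (1 / \<mu>) *\<^sub>R \<psi>) \<bullet> x + \<beta> / \<mu> \<le> f x"
    if "x \<in> K" for x
    using below[OF that] above_g[OF that] \<mu> by (simp add: field_simps)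
  then show ?thesis by blast
qed

lemma concave_convex_common_gradient_at_max_gap:
  fixes f g :: "'a::euclidean_space \<Rightarrow> real"
  assumes f: "convex_on K f" and g: "concave_on K g" and int: "interior K \<noteq> {}"
    and x0: "x0 \<in> K" and max: "\<forall>x\<in>K. g x - f x \<le> g x0 - f x0"
  shows "\<exists>\<phi>. \<forall>x\<in>K. g x - g x0 \<le> \<phi> \<bullet> (x - x0) \<and> \<phi> \<bullet> (x - x0) \<le> f x - f x0"
proof -
  define m where "m = f x0 - g x0"
  have "concave_on K (\<lambda>x. g x + m)"
    using g by (intro concave_on_add concave_on_const[THEN iffD2] concave_on_imp_convex)
  moreover have "\<forall>x\<in>K. g x + m \<le> f x"
    using max by (fastforce simp: m_def)
  ultimately obtain \<phi> b where \<phi>: "\<forall>x\<in>K. g x + m \<le> \<phi> \<bullet> x + b \<and> \<phi> \<bullet> x + b \<le> f x"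
    using concave_convex_sandwich[OF f _ int] by blast
  then have "b = f x0 - \<phi> \<bullet> x0"
    using x0 by (force simp: m_def)
  with \<phi> have "\<forall>x\<in>K. g x - g x0 \<le> \<phi> \<bullet> (x - x0) \<and> \<phi> \<bullet> (x - x0) \<le> f x - f x0"
    by (auto simp: m_def inner_diff_right)
  then show ?thesis by blast
qed

lemma orthant_scaleR: "a \<in> orthant \<Longrightarrow> 0 \<le> t \<Longrightarrow> t *\<^sub>R a \<in> orthant"
  by (simp add: orthant_def)

lemma orthant_add: "a \<in> orthant \<Longrightarrow> b \<in> orthant \<Longrightarrow> a + b \<in> orthant"
  by (simp add: orthant_def)

lemma zero_in_orthant: "0 \<in> orthant"
  by (simp add: orthant_def)

lemma axis_in_orthant: "0 \<le> t \<Longrightarrow> axis i t \<in> orthant"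
  by (simp add: orthant_def axis_def)

lemma orthant_interior_subset_interior: "(orthant_interior :: (real ^ 'd) set) \<subseteq> interior orthant"
proof (rule interior_maximal)
  show "orthant_interior \<subseteq> orthant"
    by (auto simp: orthant_interior_def orthant_def less_imp_le)
  have "orthant_interior = (\<Inter>i\<in>UNIV. {x::real ^ 'd. 0 < x $ i})"
    by (auto simp: orthant_interior_def)
  moreover have "open (\<Inter>i\<in>UNIV. {x::real ^ 'd. 0 < x $ i})"
    by (intro open_INT ballI finite_class.finite_UNIV open_halfspace_component_gt_cart)
  ultimately show "open (orthant_interior :: (real ^ 'd) set)"
    by simp
qed

lemma interior_orthant_nonempty: "interior (orthant :: (real ^ 'd) set) \<noteq> {}"
proof -
  have "(\<chi> i. 1) \<in> (orthant_interior :: (real ^ 'd) set)"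
    by (simp add: orthant_interior_def)
  then show ?thesis
    using orthant_interior_subset_interior by blast
qed

lemma homogeneous_on_orthantD:
  "homogeneous_on_orthant k g \<Longrightarrow> 0 < t \<Longrightarrow> a \<in> orthant \<Longrightarrow> g (t *\<^sub>R a) = t powr k * g a"
  by (simp add: homogeneous_on_orthant_def)

lemma homogeneous_on_orthant_zero:
  assumes "homogeneous_on_orthant k g" "k \<noteq> 0"
  shows "g 0 = 0"
proof -
  have "g 0 = 2 powr k * g 0"
    using homogeneous_on_orthantD[OF assms(1), of 2 0] zero_in_orthant by simp
  moreover have "2 powr k \<noteq> (1::real)"
    using assms(2) by (simp add: powr_eq_one_iff_gen)
  ultimately show ?thesis by simp
qed

lemma concave_homogeneous_nonneg:
  assumes conc: "concave_on orthant u" and hom: "homogeneous_on_orthant k u"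
    and k: "0 < k" "k < 1" and a: "a \<in> orthant"
  shows "0 \<le> u a"
proof -
  have "(1/2) * u a \<le> u ((1/2) *\<^sub>R a)"
    using concave_onD[OF conc, of "1/2" 0 a] a zero_in_orthant
      homogeneous_on_orthant_zero[OF hom] k by simp
  also have "\<dots> = (1/2) powr k * u a"
    using homogeneous_on_orthantD[OF hom _ a] by simp
  finally have "0 \<le> ((1/2) powr k - 1/2) * u a"
    by (simp add: algebra_simps)
  moreover have "(1/2::real) powr 1 < (1/2) powr k"
    using k by (intro powr_less_mono') auto
  ultimately show ?thesis by (simp add: zero_le_mult_iff)
qed

lemma best_response_iff_subgradient:
  "a \<in> orthant \<Longrightarrow> best_response c \<phi> a \<longleftrightarrow> (\<forall>b\<in>orthant. \<phi> \<bullet> (b - a) \<le> c b - c a)"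
  by (auto simp: best_response_def inner_diff_right algebra_simps)

lemma supergradient_in_orthant:
  assumes nonneg: "\<forall>x\<in>orthant. 0 \<le> u x" and a: "a \<in> orthant"
    and super: "\<forall>x\<in>orthant. u x - u a \<le> \<phi> \<bullet> (x - a)"
  shows "\<phi> \<in> orthant"
proof -
  have "0 \<le> \<phi> $ i" for i
  proof (rule ccontr)
    assume neg: "\<not> 0 \<le> \<phi> $ i"
    define N where "N = (u a + 1) / - \<phi> $ i"
    have "0 \<le> u a" using nonneg a by blast
    with neg have "0 < N" by (simp add: N_def divide_pos_neg)
    then have "a + axis i N \<in> orthant"
      using orthant_add[OF a axis_in_orthant] by simp
    then have "- u a \<le> \<phi> \<bullet> axis i N"
      using super nonneg by force
    also have "\<phi> \<bullet> axis i N = - (u a + 1)"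
      using neg by (simp add: N_def inner_axis)
    finally show False by simp
  qed
  then show ?thesis by (simp add: orthant_def)
qed

lemma first_best_implementable:
  assumes conc: "concave_on orthant u" and hom: "homogeneous_on_orthant k u"
    and k: "0 < k" "k < 1" and conv: "convex_on orthant c"
    and a: "a \<in> orthant" and max: "\<forall>b\<in>orthant. u b - c b \<le> u a - c a"
  shows "\<exists>\<phi>\<in>orthant. best_response c \<phi> a"
proof -
  obtain \<phi> where \<phi>: "\<forall>x\<in>orthant. u x - u a \<le> \<phi> \<bullet> (x - a) \<and> \<phi> \<bullet> (x - a) \<le> c x - c a"
    using concave_convex_common_gradient_at_max_gap[OF conv conc interior_orthant_nonempty a max]
    by blast
  have "\<phi> \<in> orthant"
    using supergradient_in_orthant concave_homogeneous_nonneg[OF conc hom k] a \<phi> by blast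
  moreover have "best_response c \<phi> a"
    using best_response_iff_subgradient[OF a] \<phi> by blast
  ultimately show ?thesis by blast
qed

lemma best_response_payment:
  assumes hom: "homogeneous_on_orthant k c" and br: "best_response c \<phi> a"
  shows "\<phi> \<bullet> a = k * c a"
proof -
  have a: "a \<in> orthant" using br by (simp add: best_response_def)
  \<comment> \<open>rescaling the action by \<open>t\<close> does not pay, so \<open>t = 1\<close> is a critical point of \<open>f\<close>\<close>
  define f where "f t = t * (\<phi> \<bullet> a) - t powr k * c a" for t
  have le: "f t \<le> f 1" if "\<bar>1 - t\<bar> < 1" for t
  proof -
    have t: "0 < t" using that by linarith
    have "\<phi> \<bullet> (t *\<^sub>R a) - c (t *\<^sub>R a) \<le> \<phi> \<bullet> a - c a"
      using br orthant_scaleR[OF a less_imp_le[OF t]] unfolding best_response_def by blast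
    then show ?thesis
      using homogeneous_on_orthantD[OF hom t a] by (simp add: f_def)
  qed
  have "(f has_real_derivative 1 * (\<phi> \<bullet> a) - k * 1 powr (k - 1) * c a) (at 1)"
    unfolding f_def by (intro derivative_eq_intros has_real_derivative_powr) auto
  then have "1 * (\<phi> \<bullet> a) - k * 1 powr (k - 1) * c a = 0"
    by (rule DERIV_local_max[of _ _ _ 1]) (use le in auto)
  then show ?thesis by simp
qed

lemma best_response_scaleR:
  assumes hom: "homogeneous_on_orthant k c" and br: "best_response c \<phi> a" and s: "0 < s"
  shows "best_response c (s powr (k - 1) *\<^sub>R \<phi>) (s *\<^sub>R a)"
proof -
  have a: "a \<in> orthant" using br by (simp add: best_response_def)
  have payoff: "(s powr (k - 1) *\<^sub>R \<phi>) \<bullet> (s *\<^sub>R b) - c (s *\<^sub>R b) = s powr k * (\<phi> \<bullet> b - c b)"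
    if "b \<in> orthant" for b
  proof -
    have "s powr (k - 1) * s = s powr k"
      using s by (simp add: powr_diff)
    then show ?thesis
      using homogeneous_on_orthantD[OF hom s that] by (simp add: algebra_simps)
  qed
  have "(s powr (k - 1) *\<^sub>R \<phi>) \<bullet> b - c b \<le> (s powr (k - 1) *\<^sub>R \<phi>) \<bullet> (s *\<^sub>R a) - c (s *\<^sub>R a)"
    if b: "b \<in> orthant" for b
  proof -
    have b': "(1 / s) *\<^sub>R b \<in> orthant" and b_eq: "b = s *\<^sub>R ((1 / s) *\<^sub>R b)"
      using orthant_scaleR[OF b] s by simp_all
    have "\<phi> \<bullet> ((1 / s) *\<^sub>R b) - c ((1 / s) *\<^sub>R b) \<le> \<phi> \<bullet> a - c a"
      using br b' unfolding best_response_def by blast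
    then show ?thesis
      using payoff[OF b'] payoff[OF a] s b_eq by (metis mult_left_mono powr_ge_zero)
  qed
  then show ?thesis
    using orthant_scaleR[OF a less_imp_le[OF s]] by (simp add: best_response_def)
qed

lemma principal_payoff_scaled_best_response:
  assumes u_hom: "homogeneous_on_orthant ku u" and c_hom: "homogeneous_on_orthant kc c"
    and a: "a \<in> orthant" and s: "0 < s" and scale: "kc * s powr kc = s powr ku"
    and br: "best_response c \<psi> (s *\<^sub>R a)"
  shows "u (s *\<^sub>R a) - \<psi> \<bullet> (s *\<^sub>R a) = s powr ku * (u a - c a)"
proof -
  have "u (s *\<^sub>R a) - \<psi> \<bullet> (s *\<^sub>R a) = u (s *\<^sub>R a) - kc * c (s *\<^sub>R a)"
    using best_response_payment[OF c_hom br] by simp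
  also have "\<dots> = s powr ku * u a - kc * s powr kc * c a"
    using homogeneous_on_orthantD[OF u_hom s a] homogeneous_on_orthantD[OF c_hom s a] by simp
  also have "\<dots> = s powr ku * (u a - c a)"
    using scale by (simp add: algebra_simps)
  finally show ?thesis .
qed

lemma optimal_scale_eq:
  fixes kc ku :: real
  defines "s \<equiv> kc powr (- 1 / (kc - ku))"
  assumes "0 < kc" "ku \<noteq> kc"
  shows "kc * s powr kc = s powr ku"
proof -
  have "s powr (kc - ku) = kc powr (- 1 / (kc - ku) * (kc - ku))"
    unfolding s_def by (rule powr_powr)
  also have "\<dots> = 1 / kc"
    using assms by (simp add: powr_minus_divide)
  finally have "s powr (kc - ku) = 1 / kc" .
  moreover have "s powr kc = s powr (kc - ku) * s powr ku"
    by (simp add: powr_add[symmetric])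
  ultimately show ?thesis using assms by simp
qed

theorem mainTheorem8:
  fixes u c :: "real ^ 'd \<Rightarrow> real" and ku kc :: real
    and aFB aLIN \<phi>LIN :: "real ^ 'd"
  assumes ku: "0 < ku" "ku < 1" and kc: "1 < kc"
    and u_concave: "concave_on orthant u" and u_hom: "homogeneous_on_orthant ku u"
    and c_convex: "convex_on orthant c" and c_hom: "homogeneous_on_orthant kc c"
    and FB_int: "aFB \<in> orthant_interior"
    and FB_max: "\<forall>a\<in>orthant. u a - c a \<le> u aFB - c aFB"
    and FB_pos: "u aFB - c aFB > 0"
    and LIN_contract: "\<phi>LIN \<in> orthant"
    and LIN_br: "best_response c \<phi>LIN aLIN"
    and LIN_int: "aLIN \<in> orthant_interior"
    and LIN_max: "\<forall>\<phi>\<in>orthant. \<forall>a. best_response c \<phi> a \<longrightarrow>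
                    u a - \<phi> \<bullet> a \<le> u aLIN - \<phi>LIN \<bullet> aLIN"
  shows "(u aLIN - \<phi>LIN \<bullet> aLIN) / (u aFB - c aFB) = kc powr (- ku / (kc - ku))"
proof -
  \<comment> \<open>of \<open>FB_int\<close> only \<open>aFB \<in> orthant\<close> is used\<close>
  define s where "s = kc powr (- 1 / (kc - ku))"
  have s: "0 < s" and scale: "kc * s powr kc = s powr ku"
    using kc ku optimal_scale_eq[of kc ku] by (simp_all add: s_def)
  have aFB: "aFB \<in> orthant"
    using FB_int orthant_interior_subset_interior interior_subset by blast
  have aLIN': "(1 / s) *\<^sub>R aLIN \<in> orthant"
    using LIN_br s by (simp add: best_response_def orthant_scaleR)
  obtain \<phi>FB where \<phi>FB: "\<phi>FB \<in> orthant" "best_response c \<phi>FB aFB"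
    using first_best_implementable[OF u_concave u_hom ku c_convex aFB FB_max] by blast
  have br_FB: "best_response c (s powr (kc - 1) *\<^sub>R \<phi>FB) (s *\<^sub>R aFB)"
    using best_response_scaleR[OF c_hom \<phi>FB(2) s] .
  have "u aLIN - \<phi>LIN \<bullet> aLIN = s powr ku * (u ((1 / s) *\<^sub>R aLIN) - c ((1 / s) *\<^sub>R aLIN))"
    using principal_payoff_scaled_best_response[OF u_hom c_hom aLIN' s scale] LIN_br s by simp
  also have "\<dots> \<le> s powr ku * (u aFB - c aFB)"
    using FB_max aLIN' by (simp add: mult_left_mono)
  finally have upper: "u aLIN - \<phi>LIN \<bullet> aLIN \<le> s powr ku * (u aFB - c aFB)" .
  have "s powr ku * (u aFB - c aFB) = u (s *\<^sub>R aFB) - (s powr (kc - 1) *\<^sub>R \<phi>FB) \<bullet> (s *\<^sub>R aFB)"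
    using principal_payoff_scaled_best_response[OF u_hom c_hom aFB s scale br_FB] by simp
  also have "\<dots> \<le> u aLIN - \<phi>LIN \<bullet> aLIN"
    using LIN_max orthant_scaleR[OF \<phi>FB(1) powr_ge_zero] br_FB by blast
  finally have "u aLIN - \<phi>LIN \<bullet> aLIN = s powr ku * (u aFB - c aFB)"
    using upper by simp
  moreover have "s powr ku = kc powr (- ku / (kc - ku))"
    using kc by (simp add: s_def powr_powr)
  ultimately show ?thesis using FB_pos by simp
qed

end
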